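(* Let $L$ be a Lie conformal superalgebra with $Z_L(L')=0$, where $L'$ is the derived subalgebra of $L$, and let $A$ be an associative commutative algebra with unity. If every linear super-commuting map on $L$ belongs to $\mathrm{Cent}(L)$, then every linear super-commuting map on the current Lie conformal superalgebra $L\otimes A$ belongs to $\mathrm{Cent}(L\otimes A)$.
   Context: A Lie conformal superalgebra is a $\mathbb{Z}_2$-graded $\mathbb{C}[\partial]$-module with a $\mathbb{C}$-linear $\lambda$-bracket into $\mathbb{C}[\lambda]\otimes L$ satisfying $[\partial x_\lambda y]=-\lambda[x_\lambda y]$, $[x_\lambda\partial y]=(\partial+\lambda)[x_\lambda y]$, $[x_\lambda y]=-(-1)^{|x||y|}[y_{-\lambda-\partial}x]$, $[x_\lambda[y_\mu z]]=[[x_\lambda y]_{\lambda+\mu}z]+(-1)^{|x||y|}[y_\mu[x_\lambda z]]$. The derived subalgebra $L'$ is the span of all coefficients of brackets $[x_\lambda y]$, $x,y\in L$. For $S\subseteq L$, the centralizer is $Z_L(S)=\{x\in L:[x_\lambda y]=0\ \forall y\in S\}$. The current Lie conformal superalgebra $L\otimes A$ has grading $|x\otimes a|=|x|$, $\partial(x\otimes a)=\partial x\otimes a$, and bracket $[(x\otimes a)_\lambda(y\otimes b)]=[x_\lambda y]\otimes ab$. A super-commuting map on a Lie conformal superalgebra $\mathcal L$ is a map $\Psi_\lambda:\mathcal L\to\mathbb{C}[\lambda]\otimes\mathcal L$, homogeneous of degree $|\Psi|$, with $[\Psi_\lambda(u)_{\lambda+\mu}u]=0$ for all $u\in\mathcal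 L$. The centroid $\mathrm{Cent}(\mathcal L)$ consists of linear maps $\alpha_\lambda:\mathcal L\to\mathbb{C}[\lambda]\otimes\mathcal L$ of degree $|\alpha|$ with $\alpha_\lambda([x_\mu y])=(-1)^{|x||\alpha|}[x_\mu\alpha_\lambda(y)]=[\alpha_\lambda(x)_\mu y]$ for all homogeneous $x,y$. *)

theory Defs
  imports "HOL-Computational_Algebra.Polynomial"
begin

text \<open>
A complex vector space is a type with an addition together with a scalar
multiplication s :: complex => 'v => 'v satisfying the locale vector_space s.
The space C[lambda] (x) V is represented by the polynomial type 'v poly
(coeff P n = coefficient of lambda^n).  Elements of C[lambda,mu] (x) V are represented by
their coefficient functions nat => nat => 'v (entry n m = coefficient of lambda^n mu^m).
The Z2-grading is a function g :: bool => 'v set, g False = even part, g True = odd part;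
parities add via (~=).
\<close>

definition psign :: "bool \<Rightarrow> bool \<Rightarrow> complex" where
  "psign i j = (if i \<and> j then -1 else 1)"

definition lin_to_poly ::
  "(complex \<Rightarrow> 'v::ab_group_add \<Rightarrow> 'v) \<Rightarrow> (complex \<Rightarrow> 'w::ab_group_add \<Rightarrow> 'w)
     \<Rightarrow> ('v \<Rightarrow> 'w poly) \<Rightarrow> bool" where
  "lin_to_poly s1 s2 f \<longleftrightarrow>
     (\<forall>x y. f (x + y) = f x + f y) \<and> (\<forall>c x. f (s1 c x) = map_poly (s2 c) (f x))"

text \<open>Coefficients of [P_{lambda+mu} z] in C[lambda,mu] (x) V, for P in C[lambda] (x) V:
  writing P = sum_k lambda^k p_k and [p_k nu z] = sum_j nu^j q_kj, one has
  [P_{lambda+mu} z] = sum_{k,j} lambda^k (lambda+mu)^j q_kj.\<close>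
definition br_shift ::
  "(complex \<Rightarrow> 'v::ab_group_add \<Rightarrow> 'v) \<Rightarrow> ('v \<Rightarrow> 'v \<Rightarrow> 'v poly) \<Rightarrow> 'v poly \<Rightarrow> 'v
     \<Rightarrow> nat \<Rightarrow> nat \<Rightarrow> 'v" where
  "br_shift s br P z n m =
     (\<Sum>k\<le>n. s (of_nat ((n - k + m) choose m)) (coeff (br (coeff P k) z) (n - k + m)))"

text \<open>Coefficient of lambda^k in sum_j (-lambda-D)^j p_j, where P = sum_j lambda^j p_j.\<close>
definition subst_neg_lam_D ::
  "(complex \<Rightarrow> 'v::ab_group_add \<Rightarrow> 'v) \<Rightarrow> ('v \<Rightarrow> 'v) \<Rightarrow> 'v poly \<Rightarrow> nat \<Rightarrow> 'v" where
  "subst_neg_lam_D s D P k =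
     (\<Sum>j\<in>{k..degree P}. s ((-1) ^ j * of_nat (j choose k)) ((D ^^ (j - k)) (coeff P j)))"

definition lie_conf_superalg ::
  "(complex \<Rightarrow> 'v::ab_group_add \<Rightarrow> 'v) \<Rightarrow> ('v \<Rightarrow> 'v) \<Rightarrow> (bool \<Rightarrow> 'v set)
     \<Rightarrow> ('v \<Rightarrow> 'v \<Rightarrow> 'v poly) \<Rightarrow> bool" where
  "lie_conf_superalg s D g br \<longleftrightarrow>
     vector_space s \<and>
     Vector_Spaces.linear s s D \<and>
     \<comment> \<open>Z2-graded C[D]-module\<close>
     module.subspace s (g False) \<and> module.subspace s (g True) \<and>
     g False \<inter> g True = {0} \<and>
     (\<forall>x. \<exists>x0\<in>g False. \<exists>x1\<in>g True. x = x0 + x1) \<and>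
     (\<forall>i. \<forall>x\<in>g i. D x \<in> g i) \<and>
     \<comment> \<open>the bracket is C-bilinear and respects the grading\<close>
     (\<forall>x. lin_to_poly s s (br x)) \<and>
     (\<forall>y. lin_to_poly s s (\<lambda>x. br x y)) \<and>
     (\<forall>i j. \<forall>x\<in>g i. \<forall>y\<in>g j. \<forall>n. coeff (br x y) n \<in> g (i \<noteq> j)) \<and>
     \<comment> \<open>[D x_lambda y] = - lambda [x_lambda y]\<close>
     (\<forall>x y. br (D x) y = - pCons 0 (br x y)) \<and>
     \<comment> \<open>[x_lambda D y] = (D + lambda) [x_lambda y]\<close>
     (\<forall>x y. br x (D y) = map_poly D (br x y) + pCons 0 (br x y)) \<and>
     \<comment> \<open>skew-symmetry [x_lambda y] = -(-1)^{|x||y|} [y_{-lambda-D} x]\<close>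
     (\<forall>i j. \<forall>x\<in>g i. \<forall>y\<in>g j. \<forall>k.
        coeff (br x y) k = - s (psign i j) (subst_neg_lam_D s D (br y x) k)) \<and>
     \<comment> \<open>Jacobi identity, compared coefficientwise in lambda^n mu^m\<close>
     (\<forall>i j. \<forall>x\<in>g i. \<forall>y\<in>g j. \<forall>z n m.
        coeff (br x (coeff (br y z) m)) n =
          br_shift s br (br x y) z n m + s (psign i j) (coeff (br y (coeff (br x z) n)) m))"

definition derived ::
  "(complex \<Rightarrow> 'v::ab_group_add \<Rightarrow> 'v) \<Rightarrow> ('v \<Rightarrow> 'v \<Rightarrow> 'v poly) \<Rightarrow> 'v set" where
  "derived s br = module.span s {coeff (br x y) n | x y n. True}"

definition centralizer :: "('v::zero \<Rightarrow> 'v \<Rightarrow> 'v poly) \<Rightarrow> 'v set \<Rightarrow> 'v set" where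
  "centralizer br S = {x. \<forall>y\<in>S. br x y = 0}"

definition homog_deg :: "(bool \<Rightarrow> 'v set) \<Rightarrow> bool \<Rightarrow> ('v \<Rightarrow> 'v::zero poly) \<Rightarrow> bool" where
  "homog_deg g d f \<longleftrightarrow> (\<forall>i. \<forall>x\<in>g i. \<forall>n. coeff (f x) n \<in> g (i \<noteq> d))"

text \<open>Linear super-commuting map of degree d: [Psi_lambda(u)_{lambda+mu} u] = 0 for all u.\<close>
definition super_commuting ::
  "(complex \<Rightarrow> 'v::ab_group_add \<Rightarrow> 'v) \<Rightarrow> (bool \<Rightarrow> 'v set) \<Rightarrow> ('v \<Rightarrow> 'v \<Rightarrow> 'v poly)
     \<Rightarrow> bool \<Rightarrow> ('v \<Rightarrow> 'v poly) \<Rightarrow> bool" where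
  "super_commuting s g br d Psi \<longleftrightarrow>
     lin_to_poly s s Psi \<and> homog_deg g d Psi \<and>
     (\<forall>u n m. br_shift s br (Psi u) u n m = 0)"

text \<open>Element of the centroid of degree d:
  alpha_lambda([x_mu y]) = (-1)^{|x||alpha|} [x_mu alpha_lambda(y)] = [alpha_lambda(x)_mu y],
  compared coefficientwise in lambda^n mu^m.\<close>
definition in_centroid ::
  "(complex \<Rightarrow> 'v::ab_group_add \<Rightarrow> 'v) \<Rightarrow> (bool \<Rightarrow> 'v set) \<Rightarrow> ('v \<Rightarrow> 'v \<Rightarrow> 'v poly)
     \<Rightarrow> bool \<Rightarrow> ('v \<Rightarrow> 'v poly) \<Rightarrow> bool" where
  "in_centroid s g br d \<alpha> \<longleftrightarrow>
     lin_to_poly s s \<alpha> \<and> homog_deg g d \<alpha> \<and>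
     (\<forall>i j. \<forall>x\<in>g i. \<forall>y\<in>g j. \<forall>n m.
        coeff (\<alpha> (coeff (br x y) m)) n = s (psign i d) (coeff (br x (coeff (\<alpha> y) n)) m) \<and>
        coeff (\<alpha> (coeff (br x y) m)) n = coeff (br (coeff (\<alpha> x) n) y) m)"

definition comm_algebra :: "(complex \<Rightarrow> 'a::comm_ring_1 \<Rightarrow> 'a) \<Rightarrow> bool" where
  "comm_algebra s \<longleftrightarrow> vector_space s \<and> (\<forall>c a b. s c (a * b) = s c a * b)"

definition tensor_product ::
  "(complex \<Rightarrow> 'l::ab_group_add \<Rightarrow> 'l) \<Rightarrow> (complex \<Rightarrow> 'a::ab_group_add \<Rightarrow> 'a)
     \<Rightarrow> (complex \<Rightarrow> 't::ab_group_add \<Rightarrow> 't) \<Rightarrow> ('l \<Rightarrow> 'a \<Rightarrow> 't) \<Rightarrow> bool" where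
  "tensor_product sL sA sT tens \<longleftrightarrow>
     vector_space sL \<and> vector_space sA \<and> vector_space sT \<and>
     (\<forall>x. Vector_Spaces.linear sA sT (tens x)) \<and>
     (\<forall>a. Vector_Spaces.linear sL sT (\<lambda>x. tens x a)) \<and>
     module.span sT {tens x a | x a. True} = UNIV \<and>
     (\<forall>f :: 'l \<Rightarrow> 'a \<Rightarrow> complex.
        (\<forall>x. Vector_Spaces.linear sA (*) (f x)) \<and> (\<forall>a. Vector_Spaces.linear sL (*) (\<lambda>x. f x a))
        \<longrightarrow> (\<exists>h. Vector_Spaces.linear sT (*) h \<and> (\<forall>x a. h (tens x a) = f x a)))"

definition current_grading ::
  "(complex \<Rightarrow> 't::ab_group_add \<Rightarrow> 't) \<Rightarrow> ('l \<Rightarrow> 'a \<Rightarrow> 't) \<Rightarrow> (bool \<Rightarrow> 'l set) \<Rightarrow> bool \<Rightarrow> 't set" where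
  "current_grading sT tens g i = module.span sT {tens x a | x a. x \<in> g i}"

definition current_structure ::
  "(complex \<Rightarrow> 'l::ab_group_add \<Rightarrow> 'l) \<Rightarrow> ('l \<Rightarrow> 'l) \<Rightarrow> ('l \<Rightarrow> 'l \<Rightarrow> 'l poly)
     \<Rightarrow> (complex \<Rightarrow> 't::ab_group_add \<Rightarrow> 't) \<Rightarrow> ('l \<Rightarrow> 'a::comm_ring_1 \<Rightarrow> 't)
     \<Rightarrow> ('t \<Rightarrow> 't) \<Rightarrow> ('t \<Rightarrow> 't \<Rightarrow> 't poly) \<Rightarrow> bool" where
  "current_structure sL D br sT tens DT brT \<longleftrightarrow>
     Vector_Spaces.linear sT sT DT \<and>
     (\<forall>x a. DT (tens x a) = tens (D x) a) \<and>
     (\<forall>u. lin_to_poly sT sT (brT u)) \<and>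
     (\<forall>v. lin_to_poly sT sT (\<lambda>u. brT u v)) \<and>
     (\<forall>x a y b. brT (tens x a) (tens y b) = map_poly (\<lambda>c. tens c (a * b)) (br x y))"

end

theory Submission
  imports Defs
begin

text \<open>
Each coefficient P of a super-commuting map on L \<otimes> A is a commuting linear map of T = L \<otimes> A.
For a linear functional g on A and c \<in> A consider the map z \<mapsto> (id \<otimes> g) (P (z \<otimes> c)) on L.
For c = 1 it is a commuting map of L, hence lies in the centroid by hypothesis; polarizing
the commuting identity of P in the A-variable shows the same for every c, and that on
brackets the map only depends on the functional a \<mapsto> g (a c).  Since the maps id \<otimes> g
separate the points of L \<otimes> A, the centroid identities for P hold on pure tensors, and then
everywhere by linearity.
\<close>

lemma vector_space_complex_mult: "vector_space ((*) :: complex \<Rightarrow> complex \<Rightarrow> complex)"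
  by unfold_locales (auto simp: algebra_simps)

lemma linear_eq_on_span:
  assumes "Vector_Spaces.linear s1 s2 f" "Vector_Spaces.linear s1 s2 h"
    and "x \<in> module.span s1 B" "\<And>b. b \<in> B \<Longrightarrow> f b = h b"
  shows "f x = h x"
  using assms
  by (intro vector_space_pair.linear_eq_on[of s1 s2 f h x B])
     (auto simp: vector_space_pair_def Vector_Spaces.linear_iff)

lemma linear_compose_fun:
  "Vector_Spaces.linear s1 s2 f \<Longrightarrow> Vector_Spaces.linear s2 s3 h \<Longrightarrow>
     Vector_Spaces.linear s1 s3 (\<lambda>x. h (f x))"
  using Vector_Spaces.linear_compose[of s1 s2 f s3 h] by (simp add: o_def)

lemma (in vector_space) linear_scale_fun:
  "Vector_Spaces.linear s1 scale f \<Longrightarrow> Vector_Spaces.linear s1 scale (\<lambda>x. scale c (f x))"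
  by (simp add: Vector_Spaces.linear_iff scale_right_distrib scale_left_commute)

lemma (in vector_space) exists_linear_functional_nonzero:
  assumes "x \<noteq> 0"
  obtains \<phi> where "Vector_Spaces.linear scale (*) \<phi>" "\<phi> x = 1"
proof -
  have "independent {x}" using assms by simp
  then obtain B where B: "{x} \<subseteq> B" "independent B" "UNIV \<subseteq> span B"
    by (rule maximal_independent_subset_extend[OF subset_UNIV])
  then have "x \<in> B" "span B = UNIV" by auto
  have "representation B x x = 1"
    using representation_basis[OF B(2) \<open>x \<in> B\<close>] by simp
  then show ?thesis
    using that[OF linear_representation[OF B(2) \<open>span B = UNIV\<close>]] by blast
qed

lemma (in vector_space) eq_if_linear_functionals_eq:
  assumes "\<And>\<phi>. Vector_Spaces.linear scale (*) \<phi> \<Longrightarrow> \<phi> x = \<phi> y"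
  shows "x = y"
proof (rule ccontr)
  assume "x \<noteq> y"
  then obtain \<phi> where \<phi>: "Vector_Spaces.linear scale (*) \<phi>" "\<phi> (x - y) = 1"
    using exists_linear_functional_nonzero[of "x - y"] by auto
  have "\<phi> (x - y) = \<phi> x - \<phi> y"
    using \<phi>(1) by (metis add_diff_cancel diff_add_cancel Vector_Spaces.linear_iff)
  with \<phi> assms[OF \<phi>(1)] show False by simp
qed

lemma lin_to_poly_add: "lin_to_poly s1 s2 f \<Longrightarrow> f (x + y) = f x + f y"
  by (simp add: lin_to_poly_def)

lemma lin_to_poly_zero: "lin_to_poly s1 s2 f \<Longrightarrow> f 0 = 0"
  using lin_to_poly_add[of s1 s2 f 0 0] by simp

lemma linear_coeff_lin_to_poly:
  assumes "vector_space s1" "vector_space s2" "lin_to_poly s1 s2 f"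
  shows "Vector_Spaces.linear s1 s2 (\<lambda>x. coeff (f x) n)"
proof -
  interpret vector_space s2 by fact
  show ?thesis
    using assms by (simp add: Vector_Spaces.linear_iff lin_to_poly_def coeff_map_poly)
qed

text \<open>The \<open>\<lambda>\<close>-independent case of super_commuting and in_centroid: a linear
  map \<open>\<theta>\<close> viewed as the constant map \<open>\<Psi>\<^sub>\<lambda> = \<theta>\<close>.\<close>

definition commuting_map ::
  "(complex \<Rightarrow> 'v::ab_group_add \<Rightarrow> 'v) \<Rightarrow> (bool \<Rightarrow> 'v set) \<Rightarrow> ('v \<Rightarrow> 'v \<Rightarrow> 'v poly)
     \<Rightarrow> bool \<Rightarrow> ('v \<Rightarrow> 'v) \<Rightarrow> bool" where
  "commuting_map s g br d \<theta> \<longleftrightarrow>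
     Vector_Spaces.linear s s \<theta> \<and> (\<forall>i. \<forall>x\<in>g i. \<theta> x \<in> g (i \<noteq> d)) \<and> (\<forall>x. br (\<theta> x) x = 0)"

definition centroid_map ::
  "(complex \<Rightarrow> 'v::ab_group_add \<Rightarrow> 'v) \<Rightarrow> (bool \<Rightarrow> 'v set) \<Rightarrow> ('v \<Rightarrow> 'v \<Rightarrow> 'v poly)
     \<Rightarrow> bool \<Rightarrow> ('v \<Rightarrow> 'v) \<Rightarrow> bool" where
  "centroid_map s g br d \<theta> \<longleftrightarrow>
     (\<forall>i j. \<forall>x\<in>g i. \<forall>y\<in>g j. \<forall>m.
        \<theta> (coeff (br x y) m) = s (psign i d) (coeff (br x (\<theta> y)) m) \<and>
        \<theta> (coeff (br x y) m) = coeff (br (\<theta> x) y) m)"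

lemma commuting_map_skew:
  assumes "commuting_map s g br d \<theta>"
    and "\<And>x. lin_to_poly s s (br x)" "\<And>y. lin_to_poly s s (\<lambda>x. br x y)"
  shows "br (\<theta> u) v = - br (\<theta> v) u"
proof -
  have \<theta>_add: "\<theta> (u + v) = \<theta> u + \<theta> v"
    using assms(1) by (simp add: commuting_map_def Vector_Spaces.linear_iff)
  have "br (\<theta> (u + v)) (u + v) = 0" and "br (\<theta> u) u = 0" and "br (\<theta> v) v = 0"
    using assms(1) by (simp_all add: commuting_map_def)
  then have "br (\<theta> u) v + br (\<theta> v) u = 0"
    by (simp add: \<theta>_add lin_to_poly_add[OF assms(2)] lin_to_poly_add[OF assms(3)] add.commute)
  then show ?thesis by (simp add: eq_neg_iff_add_eq_0)
qed

lemma centroid_map_diff: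
  assumes "vector_space s" "\<And>x. lin_to_poly s s (br x)" "\<And>y. lin_to_poly s s (\<lambda>x. br x y)"
    and "centroid_map s g br d \<theta>1" "centroid_map s g br d \<theta>2"
  shows "centroid_map s g br d (\<lambda>z. \<theta>1 z - \<theta>2 z)"
  unfolding centroid_map_def
proof (intro allI ballI conjI)
  interpret vector_space s by fact
  have diff_right: "coeff (br x (y - z)) m = coeff (br x y) m - coeff (br x z) m" for x y z m
    by (metis add_diff_cancel diff_add_cancel lin_to_poly_add[OF assms(2)] coeff_add)
  have diff_left: "coeff (br (y - z) x) m = coeff (br y x) m - coeff (br z x) m" for x y z m
    by (metis add_diff_cancel diff_add_cancel lin_to_poly_add[OF assms(3)] coeff_add)
  fix i j x y m assume "x \<in> g i" "y \<in> g j"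
  with assms(4,5) have \<theta>1: "\<theta>1 (coeff (br x y) m) = s (psign i d) (coeff (br x (\<theta>1 y)) m)"
      "\<theta>1 (coeff (br x y) m) = coeff (br (\<theta>1 x) y) m"
    and \<theta>2: "\<theta>2 (coeff (br x y) m) = s (psign i d) (coeff (br x (\<theta>2 y)) m)"
      "\<theta>2 (coeff (br x y) m) = coeff (br (\<theta>2 x) y) m"
    unfolding centroid_map_def by blast+
  show "\<theta>1 (coeff (br x y) m) - \<theta>2 (coeff (br x y) m) = s (psign i d) (coeff (br x (\<theta>1 y - \<theta>2 y)) m)"
    by (simp only: diff_right scale_right_diff_distrib \<theta>1(1) \<theta>2(1))
  show "\<theta>1 (coeff (br x y) m) - \<theta>2 (coeff (br x y) m) = coeff (br (\<theta>1 x - \<theta>2 x) y) m"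
    by (simp only: diff_left \<theta>1(2) \<theta>2(2))
qed

lemma super_commuting_const:
  assumes "vector_space s" "\<And>i. module.subspace s (g i)" "\<And>y. lin_to_poly s s (\<lambda>x. br x y)"
    and "commuting_map s g br d \<theta>"
  shows "super_commuting s g br d (\<lambda>x. [:\<theta> x:])"
  unfolding super_commuting_def
proof (intro conjI allI)
  interpret vector_space s by fact
  have map_const: "map_poly (s c) [:a:] = [:s c a:]" for c a
    by (rule poly_eqI) (simp add: coeff_map_poly coeff_pCons split: nat.split)
  show "lin_to_poly s s (\<lambda>x. [:\<theta> x:])"
    using assms(4) by (simp add: lin_to_poly_def commuting_map_def Vector_Spaces.linear_iff map_const)
  show "homog_deg g d (\<lambda>x. [:\<theta> x:])"
    using assms(4) subspace_0[OF assms(2)]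
    by (auto simp: homog_deg_def commuting_map_def coeff_pCons split: nat.split)
  fix u n m
  have "coeff (br (coeff [:\<theta> u:] k) u) j = 0" for k j
    using assms(4) lin_to_poly_zero[OF assms(3)]
    by (cases k) (auto simp: commuting_map_def)
  then show "br_shift s br [:\<theta> u:] u n m = 0" by (simp add: br_shift_def)
qed

lemma centroid_map_if_in_centroid_const:
  "in_centroid s g br d (\<lambda>x. [:\<theta> x:]) \<Longrightarrow> centroid_map s g br d \<theta>"
  unfolding in_centroid_def centroid_map_def by (metis coeff_pCons_0)

text \<open>Comparing coefficients of \<open>\<lambda>\<^sup>k (\<lambda> + \<mu>)\<^sup>j\<close> by induction on k shows that
  \<open>[\<Psi>\<^sub>\<lambda>(u)\<^sub>\<lambda>\<^sub>+\<^sub>\<mu> u] = 0\<close> forces every coefficient of \<open>\<Psi>\<^sub>\<lambda>(u)\<close> to commute with u.\<close>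

lemma bracket_coeff_eq_0_if_br_shift_eq_0:
  assumes "vector_space s" and "\<And>n m. br_shift s br P z n m = 0"
  shows "br (coeff P k) z = 0"
proof -
  interpret vector_space s by fact
  have "coeff (br (coeff P k) z) j = 0" for j
  proof (induct k arbitrary: j rule: less_induct)
    case (less k)
    have "br_shift s br P z k j =
        (\<Sum>i<k. s (of_nat ((k - i + j) choose j)) (coeff (br (coeff P i) z) (k - i + j)))
        + s (of_nat ((k - k + j) choose j)) (coeff (br (coeff P k) z) (k - k + j))"
      unfolding br_shift_def lessThan_Suc_atMost[symmetric] by (rule sum.lessThan_Suc)
    also have "(\<Sum>i<k. s (of_nat ((k - i + j) choose j)) (coeff (br (coeff P i) z) (k - i + j))) = 0"
      using less by (intro sum.neutral) auto
    finally show ?case using assms(2)[of k j] by simp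
  qed
  then show ?thesis by (simp add: poly_eqI)
qed

lemma super_commuting_imp_commuting_map_coeff:
  assumes "vector_space s" "super_commuting s g br d \<Psi>"
  shows "commuting_map s g br d (\<lambda>u. coeff (\<Psi> u) n)"
  unfolding commuting_map_def
proof (intro conjI allI ballI)
  show "Vector_Spaces.linear s s (\<lambda>u. coeff (\<Psi> u) n)"
    using assms by (intro linear_coeff_lin_to_poly) (simp_all add: super_commuting_def)
  show "coeff (\<Psi> x) n \<in> g (i \<noteq> d)" if "x \<in> g i" for i x
    using assms(2) that by (simp add: super_commuting_def homog_deg_def)
  show "br (coeff (\<Psi> u) n) u = 0" for u
    using assms(2) by (intro bracket_coeff_eq_0_if_br_shift_eq_0[OF assms(1)]) (simp add: super_commuting_def)
qed

lemma in_centroid_iff_coeffs: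
  "in_centroid s g br d \<Psi> \<longleftrightarrow>
     lin_to_poly s s \<Psi> \<and> homog_deg g d \<Psi> \<and> (\<forall>n. centroid_map s g br d (\<lambda>u. coeff (\<Psi> u) n))"
  unfolding in_centroid_def centroid_map_def by blast

locale tensor_product_space =
  fixes sL :: "complex \<Rightarrow> 'l::ab_group_add \<Rightarrow> 'l" and sA :: "complex \<Rightarrow> 'a::ab_group_add \<Rightarrow> 'a"
    and sT :: "complex \<Rightarrow> 't::ab_group_add \<Rightarrow> 't" and tens :: "'l \<Rightarrow> 'a \<Rightarrow> 't"
  assumes tensor_product: "tensor_product sL sA sT tens"
begin

sublocale L: vector_space sL
  using tensor_product by (simp add: tensor_product_def)

sublocale A: vector_space sA
  using tensor_product by (simp add: tensor_product_def)

sublocale T: vector_space sT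
  using tensor_product by (simp add: tensor_product_def)

lemma tens_add_left: "tens (x + y) a = tens x a + tens y a"
  and tens_scale_left: "tens (sL c x) a = sT c (tens x a)"
  and tens_add_right: "tens x (a + b) = tens x a + tens x b"
  and tens_scale_right: "tens x (sA c a) = sT c (tens x a)"
  using tensor_product by (simp_all add: tensor_product_def Vector_Spaces.linear_iff)

lemma tens_zero_left [simp]: "tens 0 a = 0"
  using tens_scale_left[of 0 0 a] by simp

lemma tens_zero_right [simp]: "tens x 0 = 0"
  using tens_scale_right[of x 0 0] by simp

lemma tens_sum_right: "finite E \<Longrightarrow> tens x (\<Sum>e\<in>E. f e) = (\<Sum>e\<in>E. tens x (f e))"
  by (induct rule: finite_induct) (simp_all add: tens_add_right)

lemma in_span_tensors: "t \<in> T.span {tens x a |x a. True}"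
  using tensor_product by (simp add: tensor_product_def)

lemma linear_eq_on_tensors:
  assumes "Vector_Spaces.linear sT s f" "Vector_Spaces.linear sT s h"
    and "\<And>x a. f (tens x a) = h (tens x a)"
  shows "f t = h t"
  using assms in_span_tensors by (intro linear_eq_on_span[of sT s f h t]) auto

definition tensor_functional :: "('l \<Rightarrow> complex) \<Rightarrow> ('a \<Rightarrow> complex) \<Rightarrow> 't \<Rightarrow> complex" where
  "tensor_functional \<phi> g =
     (SOME h. Vector_Spaces.linear sT (*) h \<and> (\<forall>x a. h (tens x a) = \<phi> x * g a))"

lemma tensor_functional:
  assumes "Vector_Spaces.linear sL (*) \<phi>" "Vector_Spaces.linear sA (*) g"
  shows "Vector_Spaces.linear sT (*) (tensor_functional \<phi> g)"
    and "tensor_functional \<phi> g (tens x a) = \<phi> x * g a"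
proof -
  have "\<exists>h. Vector_Spaces.linear sT (*) h \<and> (\<forall>x a. h (tens x a) = \<phi> x * g a)"
    using tensor_product assms
    by (simp add: tensor_product_def Vector_Spaces.linear_iff algebra_simps vector_space_complex_mult)
  then have "Vector_Spaces.linear sT (*) (tensor_functional \<phi> g) \<and>
      (\<forall>x a. tensor_functional \<phi> g (tens x a) = \<phi> x * g a)"
    unfolding tensor_functional_def by (rule someI_ex)
  then show "Vector_Spaces.linear sT (*) (tensor_functional \<phi> g)"
    and "tensor_functional \<phi> g (tens x a) = \<phi> x * g a" by auto
qed

text \<open>The contraction \<open>id \<otimes> g : L \<otimes> A \<rightarrow> L\<close>.  The universal property only produces
  scalar-valued maps, so its value is characterised by all functionals \<open>\<phi> \<otimes> g\<close>.\<close>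

definition contract :: "('a \<Rightarrow> complex) \<Rightarrow> 't \<Rightarrow> 'l" where
  "contract g t = (THE l. \<forall>\<phi>. Vector_Spaces.linear sL (*) \<phi> \<longrightarrow> \<phi> l = tensor_functional \<phi> g t)"

lemma contract_exists:
  assumes g: "Vector_Spaces.linear sA (*) g"
  shows "\<exists>l. \<forall>\<phi>. Vector_Spaces.linear sL (*) \<phi> \<longrightarrow> \<phi> l = tensor_functional \<phi> g t"
  using in_span_tensors[of t]
proof (induct rule: T.span_induct_alt)
  case base
  have "\<phi> 0 = tensor_functional \<phi> g 0" if \<phi>: "Vector_Spaces.linear sL (*) \<phi>" for \<phi>
    using \<phi> tensor_functional(1)[OF \<phi> g]
    by (metis add_cancel_right_left Vector_Spaces.linear_iff)
  then show ?case by blast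
next
  case (step c t u)
  then obtain x a where t: "t = tens x a" by auto
  from step obtain l where l: "\<forall>\<phi>. Vector_Spaces.linear sL (*) \<phi> \<longrightarrow> \<phi> l = tensor_functional \<phi> g u"
    by auto
  have "\<phi> (sL c (sL (g a) x) + l) = tensor_functional \<phi> g (sT c t + u)"
    if \<phi>: "Vector_Spaces.linear sL (*) \<phi>" for \<phi>
    using \<phi> l tensor_functional[OF \<phi> g]
    by (simp add: Vector_Spaces.linear_iff t algebra_simps)
  then show ?case by blast
qed

lemma functional_contract:
  assumes "Vector_Spaces.linear sA (*) g" "Vector_Spaces.linear sL (*) \<phi>"
  shows "\<phi> (contract g t) = tensor_functional \<phi> g t"
proof -
  have "\<exists>!l. \<forall>\<phi>. Vector_Spaces.linear sL (*) \<phi> \<longrightarrow> \<phi> l = tensor_functional \<phi> g t"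
    using contract_exists[OF assms(1)] L.eq_if_linear_functionals_eq by metis
  then have "\<forall>\<phi>. Vector_Spaces.linear sL (*) \<phi> \<longrightarrow> \<phi> (contract g t) = tensor_functional \<phi> g t"
    unfolding contract_def by (rule theI')
  with assms(2) show ?thesis by blast
qed

lemma linear_contract:
  assumes g: "Vector_Spaces.linear sA (*) g"
  shows "Vector_Spaces.linear sT sL (contract g)"
  unfolding Vector_Spaces.linear_iff
proof (intro conjI allI T.vector_space_axioms L.vector_space_axioms)
  fix t u c
  show "contract g (t + u) = contract g t + contract g u"
    by (rule L.eq_if_linear_functionals_eq)
       (use tensor_functional(1)[OF _ g] in \<open>simp add: functional_contract[OF g] Vector_Spaces.linear_iff\<close>)
  show "contract g (sT c t) = sL c (contract g t)"
    by (rule L.eq_if_linear_functionals_eq)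
       (use tensor_functional(1)[OF _ g] in \<open>simp add: functional_contract[OF g] Vector_Spaces.linear_iff\<close>)
qed

lemma contract_tens: "Vector_Spaces.linear sA (*) g \<Longrightarrow> contract g (tens x a) = sL (g a) x"
  by (rule L.eq_if_linear_functionals_eq)
     (simp add: functional_contract tensor_functional Vector_Spaces.linear_iff mult.commute)

lemma contract_add: "Vector_Spaces.linear sA (*) g \<Longrightarrow> contract g (t + u) = contract g t + contract g u"
  and contract_scale: "Vector_Spaces.linear sA (*) g \<Longrightarrow> contract g (sT c t) = sL c (contract g t)"
  using linear_contract by (simp_all add: Vector_Spaces.linear_iff)

lemma contract_zero: "Vector_Spaces.linear sA (*) g \<Longrightarrow> contract g 0 = 0"
  using contract_scale[of g 0 0] by simp

lemma contract_neg: "Vector_Spaces.linear sA (*) g \<Longrightarrow> contract g (- t) = - contract g t"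
  using contract_scale[of g "-1" t] by simp

lemma tensor_basis_expansion:
  assumes B: "A.independent B" "A.span B = UNIV"
  defines "coord e \<equiv> \<lambda>a. A.representation B a e"
  shows "\<exists>E. finite E \<and> (\<forall>e. e \<notin> E \<longrightarrow> contract (coord e) t = 0)
           \<and> t = (\<Sum>e\<in>E. tens (contract (coord e) t) e)"
  using in_span_tensors[of t]
proof (induct rule: T.span_induct_alt)
  have coord: "Vector_Spaces.linear sA (*) (coord e)" for e
    unfolding coord_def by (rule A.linear_representation[OF B])
  {
    case base
    show ?case by (intro exI[of _ "{}"]) (simp add: contract_zero[OF coord])
  next
    case (step c t u)
    then obtain x a where t: "t = tens x a" by auto
    from step obtain F where F: "finite F" "\<forall>e. e \<notin> F \<longrightarrow> contract (coord e) u = 0"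
      "u = (\<Sum>e\<in>F. tens (contract (coord e) u) e)" by auto
    define E where "E = {e. coord e a \<noteq> 0}"
    have E: "finite E" unfolding E_def coord_def by (rule A.finite_representation)
    have contract_step: "contract (coord e) (sT c t + u) = sL c (sL (coord e a) x) + contract (coord e) u" for e
      by (simp add: contract_add[OF coord] contract_scale[OF coord] contract_tens[OF coord] t)
    have "(\<Sum>e\<in>E \<union> F. tens (contract (coord e) u) e) = (\<Sum>e\<in>F. tens (contract (coord e) u) e)"
      using F E by (intro sum.mono_neutral_right) auto
    then have "(\<Sum>e\<in>E \<union> F. tens (contract (coord e) u) e) = u"
      using F(3) by simp
    moreover have "(\<Sum>e\<in>E \<union> F. tens (sL (coord e a) x) e) = t"
    proof -
      have "(\<Sum>e\<in>E \<union> F. tens (sL (coord e a) x) e) = (\<Sum>e\<in>E. tens (sL (coord e a) x) e)"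
        using F E by (intro sum.mono_neutral_right) (auto simp: E_def)
      also have "\<dots> = (\<Sum>e\<in>E. tens x (sA (coord e a) e))"
        by (simp add: tens_scale_left tens_scale_right)
      also have "\<dots> = tens x (\<Sum>e\<in>E. sA (coord e a) e)" by (simp add: tens_sum_right[OF E])
      also have "(\<Sum>e\<in>E. sA (coord e a) e) = a"
        unfolding E_def coord_def by (rule A.sum_nonzero_representation_eq[OF B(1)]) (simp add: B(2))
      finally show ?thesis by (simp add: t)
    qed
    ultimately have "(\<Sum>e\<in>E \<union> F. tens (contract (coord e) (sT c t + u)) e) = sT c t + u"
      by (simp only: contract_step tens_add_left tens_scale_left sum.distrib flip: T.scale_sum_right)
    then show ?case using E F contract_step
      by (intro exI[of _ "E \<union> F"]) (auto simp: E_def)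
  }
qed

lemma tensor_eq_0_if_contract_eq_0:
  assumes "\<And>g. Vector_Spaces.linear sA (*) g \<Longrightarrow> contract g t = 0"
  shows "t = 0"
proof -
  obtain B where B: "A.independent B" "UNIV \<subseteq> A.span B"
    by (rule A.basis_exists[of UNIV]) auto
  then have "A.span B = UNIV" by auto
  then obtain E where "t = (\<Sum>e\<in>E. tens (contract (\<lambda>a. A.representation B a e) t) e)"
    using tensor_basis_expansion[OF B(1)] by blast
  with assms A.linear_representation[OF B(1) \<open>A.span B = UNIV\<close>] show ?thesis by simp
qed

lemma tensor_eq_if_contract_eq:
  assumes "\<And>g. Vector_Spaces.linear sA (*) g \<Longrightarrow> contract g t = contract g u"
  shows "t = u"
proof -
  have "t - u = 0"
  proof (rule tensor_eq_0_if_contract_eq_0)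
    fix g assume g: "Vector_Spaces.linear sA (*) g"
    show "contract g (t - u) = 0"
      using contract_add[OF g, of t "- u"] contract_neg[OF g, of u] assms[OF g] by simp
  qed
  then show ?thesis by simp
qed

lemma contract_in_subspace:
  assumes g: "Vector_Spaces.linear sA (*) g" and S: "L.subspace S"
    and t: "t \<in> T.span {tens x a |x a. x \<in> S}"
  shows "contract g t \<in> S"
  using t
proof (induct rule: T.span_induct_alt)
  case base
  show ?case using contract_zero[OF g] L.subspace_0[OF S] by simp
next
  case (step c t u)
  then obtain x a where "t = tens x a" "x \<in> S" by auto
  with step show ?case
    by (simp add: contract_add[OF g] contract_scale[OF g] contract_tens[OF g]
        L.subspace_add[OF S] L.subspace_scale[OF S])
qed

end

locale current_algebra = tensor_product_space sL sA sT tens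
  for sL :: "complex \<Rightarrow> 'l::ab_group_add \<Rightarrow> 'l" and sA :: "complex \<Rightarrow> 'a::comm_ring_1 \<Rightarrow> 'a"
    and sT :: "complex \<Rightarrow> 't::ab_group_add \<Rightarrow> 't" and tens :: "'l \<Rightarrow> 'a \<Rightarrow> 't" +
  fixes br :: "'l \<Rightarrow> 'l \<Rightarrow> 'l poly" and brT :: "'t \<Rightarrow> 't \<Rightarrow> 't poly"
    and gr :: "bool \<Rightarrow> 'l set" and d :: bool
  assumes comm_algebra: "comm_algebra sA"
    and br_right: "\<And>x. lin_to_poly sL sL (br x)"
    and br_left: "\<And>y. lin_to_poly sL sL (\<lambda>x. br x y)"
    and brT_right: "\<And>u. lin_to_poly sT sT (brT u)"
    and brT_left: "\<And>v. lin_to_poly sT sT (\<lambda>u. brT u v)"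
    and brT_tens: "\<And>x a y b. brT (tens x a) (tens y b) = map_poly (\<lambda>c. tens c (a * b)) (br x y)"
    and subspace_grading: "\<And>i. module.subspace sL (gr i)"
    and commuting_imp_centroid: "\<And>\<theta>. commuting_map sL gr br d \<theta> \<Longrightarrow> centroid_map sL gr br d \<theta>"
begin

lemma linear_coeff_br_right: "Vector_Spaces.linear sL sL (\<lambda>y. coeff (br x y) n)"
  and linear_coeff_br_left: "Vector_Spaces.linear sL sL (\<lambda>x. coeff (br x y) n)"
  and linear_coeff_brT_right: "Vector_Spaces.linear sT sT (\<lambda>v. coeff (brT u v) n)"
  and linear_coeff_brT_left: "Vector_Spaces.linear sT sT (\<lambda>u. coeff (brT u v) n)"
  by (intro linear_coeff_lin_to_poly L.vector_space_axioms T.vector_space_axioms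
      br_right br_left brT_right brT_left)+

lemma coeff_br_add_left: "coeff (br (y + z) x) n = coeff (br y x) n + coeff (br z x) n"
  and coeff_br_scale_left: "coeff (br (sL c y) x) n = sL c (coeff (br y x) n)"
  and coeff_br_scale_right: "coeff (br x (sL c y)) n = sL c (coeff (br x y) n)"
  using linear_coeff_br_left linear_coeff_br_right by (simp_all add: Vector_Spaces.linear_iff)

lemma coeff_brT_tens: "coeff (brT (tens x a) (tens y b)) n = tens (coeff (br x y) n) (a * b)"
  by (simp add: brT_tens coeff_map_poly)

lemma linear_functional_shift:
  assumes "Vector_Spaces.linear sA (*) g"
  shows "Vector_Spaces.linear sA (*) (\<lambda>a. g (a * b))"
proof -
  have scale_mult: "sA c a * b = sA c (a * b)" for c a
    using comm_algebra by (simp add: comm_algebra_def)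
  show ?thesis
    using assms unfolding Vector_Spaces.linear_iff by (simp add: distrib_right scale_mult)
qed

lemma contract_bracket_left:
  assumes g: "Vector_Spaces.linear sA (*) g"
  shows "contract g (coeff (brT t (tens y b)) n) = coeff (br (contract (\<lambda>a. g (a * b)) t) y) n"
proof (rule linear_eq_on_tensors)
  show "Vector_Spaces.linear sT sL (\<lambda>t. contract g (coeff (brT t (tens y b)) n))"
    by (rule linear_compose_fun[OF linear_coeff_brT_left linear_contract[OF g]])
  show "Vector_Spaces.linear sT sL (\<lambda>t. coeff (br (contract (\<lambda>a. g (a * b)) t) y) n)"
    by (rule linear_compose_fun[OF linear_contract[OF linear_functional_shift[OF g]] linear_coeff_br_left])
  show "contract g (coeff (brT (tens x a) (tens y b)) n) =
      coeff (br (contract (\<lambda>a. g (a * b)) (tens x a)) y) n" for x a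
    by (simp add: coeff_brT_tens contract_tens[OF g] contract_tens[OF linear_functional_shift[OF g]]
        coeff_br_scale_left)
qed

lemma contract_bracket_right:
  assumes g: "Vector_Spaces.linear sA (*) g"
  shows "contract g (coeff (brT (tens y b) t) n) = coeff (br y (contract (\<lambda>a. g (a * b)) t)) n"
proof (rule linear_eq_on_tensors)
  show "Vector_Spaces.linear sT sL (\<lambda>t. contract g (coeff (brT (tens y b) t) n))"
    by (rule linear_compose_fun[OF linear_coeff_brT_right linear_contract[OF g]])
  show "Vector_Spaces.linear sT sL (\<lambda>t. coeff (br y (contract (\<lambda>a. g (a * b)) t)) n)"
    by (rule linear_compose_fun[OF linear_contract[OF linear_functional_shift[OF g]] linear_coeff_br_right])
  show "contract g (coeff (brT (tens y b) (tens x a)) n) =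
      coeff (br y (contract (\<lambda>a. g (a * b)) (tens x a))) n" for x a
    by (simp add: coeff_brT_tens contract_tens[OF g] contract_tens[OF linear_functional_shift[OF g]]
        coeff_br_scale_right mult.commute)
qed

lemma tens_in_current_grading: "x \<in> gr i \<Longrightarrow> tens x a \<in> current_grading sT tens gr i"
  unfolding current_grading_def by (rule T.span_base) auto

lemma contract_in_grading:
  "Vector_Spaces.linear sA (*) g \<Longrightarrow> t \<in> current_grading sT tens gr i \<Longrightarrow> contract g t \<in> gr i"
  unfolding current_grading_def by (rule contract_in_subspace[OF _ subspace_grading])

lemma linear_eq_on_current_grading:
  assumes "Vector_Spaces.linear sT s f" "Vector_Spaces.linear sT s h"
    and "u \<in> current_grading sT tens gr i" "\<And>x a. x \<in> gr i \<Longrightarrow> f (tens x a) = h (tens x a)"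
  shows "f u = h u"
  using assms unfolding current_grading_def by (intro linear_eq_on_span[of sT s f h u]) auto

definition component :: "('t \<Rightarrow> 't) \<Rightarrow> ('a \<Rightarrow> complex) \<Rightarrow> 'a \<Rightarrow> 'l \<Rightarrow> 'l" where
  "component P g c z = contract g (P (tens z c))"

context
  fixes P :: "'t \<Rightarrow> 't"
  assumes P: "commuting_map sT (current_grading sT tens gr) brT d P"
begin

lemma linear_P: "Vector_Spaces.linear sT sT P"
  using P by (simp add: commuting_map_def)

lemma P_grading: "u \<in> current_grading sT tens gr i \<Longrightarrow> P u \<in> current_grading sT tens gr (i \<noteq> d)"
  using P by (simp add: commuting_map_def)

lemma brT_P_self: "brT (P u) u = 0"
  using P by (simp add: commuting_map_def)

lemma coeff_brT_P_skew: "coeff (brT (P u) v) n = - coeff (brT (P v) u) n"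
  by (simp only: commuting_map_skew[OF P brT_right brT_left, of u v] coeff_minus)

lemma linear_component:
  "Vector_Spaces.linear sA (*) g \<Longrightarrow> Vector_Spaces.linear sL sL (component P g c)"
  using linear_P linear_contract[of g]
  by (simp add: Vector_Spaces.linear_iff component_def tens_add_left tens_scale_left)

lemma component_grading:
  "Vector_Spaces.linear sA (*) g \<Longrightarrow> x \<in> gr i \<Longrightarrow> component P g c x \<in> gr (i \<noteq> d)"
  unfolding component_def by (intro contract_in_grading P_grading tens_in_current_grading)

lemma contract_bracket_component:
  assumes g: "Vector_Spaces.linear sA (*) g"
  shows "coeff (br (component P (\<lambda>a. g (a * b)) c x) y) n
    = contract g (coeff (brT (P (tens x c)) (tens y b)) n)"
  by (simp add: contract_bracket_left[OF g] component_def)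

lemma centroid_component_one:
  assumes g: "Vector_Spaces.linear sA (*) g"
  shows "centroid_map sL gr br d (component P g 1)"
proof (rule commuting_imp_centroid, unfold commuting_map_def, intro conjI allI ballI)
  show "Vector_Spaces.linear sL sL (component P g 1)" by (rule linear_component[OF g])
  show "component P g 1 x \<in> gr (i \<noteq> d)" if "x \<in> gr i" for i x
    by (rule component_grading[OF g that])
  show "br (component P g 1 x) x = 0" for x
    using contract_bracket_component[OF g, of 1 1 x x]
    by (intro poly_eqI) (simp add: brT_P_self contract_zero[OF g])
qed

text \<open>Polarization of \<open>[P(u) u] = 0\<close> at \<open>u = x \<otimes> a + x \<otimes> b\<close>.\<close>

lemma centroid_component_polarized:
  assumes g: "Vector_Spaces.linear sA (*) g"
  shows "centroid_map sL gr br d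
    (\<lambda>z. component P (\<lambda>t. g (t * b)) a z + component P (\<lambda>t. g (t * a)) b z)"
proof (rule commuting_imp_centroid, unfold commuting_map_def, intro conjI allI ballI)
  have g_b: "Vector_Spaces.linear sA (*) (\<lambda>t. g (t * b))"
    and g_a: "Vector_Spaces.linear sA (*) (\<lambda>t. g (t * a))"
    by (rule linear_functional_shift[OF g])+
  show "Vector_Spaces.linear sL sL (\<lambda>z. component P (\<lambda>t. g (t * b)) a z + component P (\<lambda>t. g (t * a)) b z)"
    using linear_component[OF g_b, of a] linear_component[OF g_a, of b]
    by (simp add: Vector_Spaces.linear_iff algebra_simps L.scale_right_distrib)
  show "component P (\<lambda>t. g (t * b)) a x + component P (\<lambda>t. g (t * a)) b x \<in> gr (i \<noteq> d)"
    if "x \<in> gr i" for i x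
    using component_grading[OF g_b that] component_grading[OF g_a that]
    by (rule L.subspace_add[OF subspace_grading])
  show "br (component P (\<lambda>t. g (t * b)) a x + component P (\<lambda>t. g (t * a)) b x) x = 0" for x
  proof (rule poly_eqI)
    fix n
    have "coeff (br (component P (\<lambda>t. g (t * b)) a x + component P (\<lambda>t. g (t * a)) b x) x) n
        = contract g (coeff (brT (P (tens x a)) (tens x b)) n)
          + contract g (coeff (brT (P (tens x b)) (tens x a)) n)"
      by (simp add: coeff_br_add_left contract_bracket_component[OF g])
    also have "\<dots> = 0"
      by (simp add: coeff_brT_P_skew[of "tens x a"] contract_neg[OF g])
    finally show "coeff (br (component P (\<lambda>t. g (t * b)) a x + component P (\<lambda>t. g (t * a)) b x) x) n
        = coeff 0 n" by simp
  qed
qed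

lemma centroid_component:
  assumes g: "Vector_Spaces.linear sA (*) g"
  shows "centroid_map sL gr br d (component P g c)"
proof -
  have "centroid_map sL gr br d
      (\<lambda>z. (component P (\<lambda>t. g (t * 1)) c z + component P (\<lambda>t. g (t * c)) 1 z)
            - component P (\<lambda>t. g (t * c)) 1 z)"
    by (rule centroid_map_diff[OF L.vector_space_axioms br_right br_left
          centroid_component_polarized[OF g] centroid_component_one[OF linear_functional_shift[OF g]]])
  then show ?thesis by simp
qed

text \<open>By the centroid property and the skew-symmetry of \<open>[P(u) v]\<close>, both sides equal
  \<open>-[component P (\<lambda>a. g (a c)) 1 y, x]\<close>.\<close>

lemma component_bracket:
  assumes g: "Vector_Spaces.linear sA (*) g" and x: "x \<in> gr i" and y: "y \<in> gr j"
  shows "component P g c (coeff (br x y) m) = component P (\<lambda>a. g (a * c)) 1 (coeff (br x y) m)"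
proof -
  have g_c: "Vector_Spaces.linear sA (*) (\<lambda>a. g (a * c))" by (rule linear_functional_shift[OF g])
  have "component P g c (coeff (br x y) m) = coeff (br (component P g c x) y) m"
    using centroid_component[OF g, of c] x y unfolding centroid_map_def by blast
  also have "\<dots> = contract g (coeff (brT (P (tens x c)) (tens y 1)) m)"
    using contract_bracket_component[OF g, of 1 c x y m] by simp
  also have "\<dots> = - contract g (coeff (brT (P (tens y 1)) (tens x c)) m)"
    by (simp add: coeff_brT_P_skew[of "tens x c"] contract_neg[OF g])
  also have "\<dots> = - coeff (br (component P (\<lambda>a. g (a * c)) 1 y) x) m"
    by (simp add: contract_bracket_component[OF g])
  finally have left:
    "component P g c (coeff (br x y) m) = - coeff (br (component P (\<lambda>a. g (a * c)) 1 y) x) m" .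
  have "component P (\<lambda>a. g (a * c)) 1 (coeff (br x y) m)
      = coeff (br (component P (\<lambda>a. g (a * c)) 1 x) y) m"
    using centroid_component[OF g_c, of 1] x y unfolding centroid_map_def by blast
  also have "\<dots> = contract (\<lambda>a. g (a * c)) (coeff (brT (P (tens x 1)) (tens y 1)) m)"
    using contract_bracket_component[OF g_c, of 1 1 x y m] by simp
  also have "\<dots> = - contract (\<lambda>a. g (a * c)) (coeff (brT (P (tens y 1)) (tens x 1)) m)"
    by (simp add: coeff_brT_P_skew[of "tens x 1"] contract_neg[OF g_c])
  also have "\<dots> = - coeff (br (component P (\<lambda>a. g (a * c)) 1 y) x) m"
    using contract_bracket_component[OF g_c, of 1 1 y x m] by simp
  finally show ?thesis using left by simp
qed

lemma contract_P_bracket_tens: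
  assumes g: "Vector_Spaces.linear sA (*) g" and x: "x \<in> gr i" and y: "y \<in> gr j"
  shows "contract g (P (coeff (brT (tens x a) (tens y b)) m))
    = component P (\<lambda>z. g (z * (a * b))) 1 (coeff (br x y) m)"
  using component_bracket[OF g x y, of "a * b" m] by (simp add: coeff_brT_tens component_def)

lemma P_bracket_tens_right:
  assumes x: "x \<in> gr i" and y: "y \<in> gr j"
  shows "P (coeff (brT (tens x a) (tens y b)) m)
    = sT (psign i d) (coeff (brT (tens x a) (P (tens y b))) m)"
proof (rule tensor_eq_if_contract_eq)
  fix g assume g: "Vector_Spaces.linear sA (*) g"
  have g_a: "Vector_Spaces.linear sA (*) (\<lambda>z. g (z * a))" by (rule linear_functional_shift[OF g])
  have "contract g (sT (psign i d) (coeff (brT (tens x a) (P (tens y b))) m))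
      = sL (psign i d) (coeff (br x (component P (\<lambda>z. g (z * a)) b y)) m)"
    by (simp add: contract_scale[OF g] contract_bracket_right[OF g] component_def)
  also have "\<dots> = component P (\<lambda>z. g (z * a)) b (coeff (br x y) m)"
    using centroid_component[OF g_a, of b] x y unfolding centroid_map_def by metis
  also have "\<dots> = component P (\<lambda>z. g (z * (a * b))) 1 (coeff (br x y) m)"
    using component_bracket[OF g_a x y, of b m] by (simp add: ac_simps)
  finally show "contract g (P (coeff (brT (tens x a) (tens y b)) m))
      = contract g (sT (psign i d) (coeff (brT (tens x a) (P (tens y b))) m))"
    using contract_P_bracket_tens[OF g x y] by simp
qed

lemma P_bracket_tens_left:
  assumes x: "x \<in> gr i" and y: "y \<in> gr j"
  shows "P (coeff (brT (tens x a) (tens y b)) m) = coeff (brT (P (tens x a)) (tens y b)) m"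
proof (rule tensor_eq_if_contract_eq)
  fix g assume g: "Vector_Spaces.linear sA (*) g"
  have g_b: "Vector_Spaces.linear sA (*) (\<lambda>z. g (z * b))" by (rule linear_functional_shift[OF g])
  have "contract g (coeff (brT (P (tens x a)) (tens y b)) m)
      = coeff (br (component P (\<lambda>z. g (z * b)) a x) y) m"
    by (simp add: contract_bracket_component[OF g])
  also have "\<dots> = component P (\<lambda>z. g (z * b)) a (coeff (br x y) m)"
    using centroid_component[OF g_b, of a] x y unfolding centroid_map_def by metis
  also have "\<dots> = component P (\<lambda>z. g (z * (a * b))) 1 (coeff (br x y) m)"
    using component_bracket[OF g_b x y, of a m] by (simp add: ac_simps)
  finally show "contract g (P (coeff (brT (tens x a) (tens y b)) m))
      = contract g (coeff (brT (P (tens x a)) (tens y b)) m)"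
    using contract_P_bracket_tens[OF g x y] by simp
qed

lemma commuting_map_in_centroid: "centroid_map sT (current_grading sT tens gr) brT d P"
  unfolding centroid_map_def
proof (intro allI ballI conjI)
  fix i j u v m
  assume u: "u \<in> current_grading sT tens gr i" and v: "v \<in> current_grading sT tens gr j"
  note linear_P_coeff = linear_compose_fun[OF _ linear_P]
  note linear_coeff_P = linear_compose_fun[OF linear_P]
  have right: "P (coeff (brT u (tens y b)) m) = sT (psign i d) (coeff (brT u (P (tens y b))) m)"
    if y: "y \<in> gr j" for y b
    by (rule linear_eq_on_current_grading[OF _ _ u])
      (auto intro: linear_P_coeff T.linear_scale_fun linear_coeff_brT_left P_bracket_tens_right[OF _ y])
  have left: "P (coeff (brT u (tens y b)) m) = coeff (brT (P u) (tens y b)) m"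
    if y: "y \<in> gr j" for y b
    by (rule linear_eq_on_current_grading[OF _ _ u])
      (auto intro: linear_P_coeff linear_coeff_P linear_coeff_brT_left P_bracket_tens_left[OF _ y])
  show "P (coeff (brT u v) m) = sT (psign i d) (coeff (brT u (P v)) m)"
    by (rule linear_eq_on_current_grading[OF _ _ v])
      (auto intro: linear_P_coeff linear_coeff_brT_right right
        T.linear_scale_fun[OF linear_coeff_P[OF linear_coeff_brT_right]])
  show "P (coeff (brT u v) m) = coeff (brT (P u) v) m"
    by (rule linear_eq_on_current_grading[OF _ _ v])
      (auto intro: linear_P_coeff linear_coeff_P linear_coeff_brT_right left)
qed

end

end

theorem mainTheorem9:
  fixes sL :: "complex \<Rightarrow> 'l::ab_group_add \<Rightarrow> 'l"
    and D :: "'l \<Rightarrow> 'l"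
    and g :: "bool \<Rightarrow> 'l set"
    and br :: "'l \<Rightarrow> 'l \<Rightarrow> 'l poly"
    and sA :: "complex \<Rightarrow> 'a::comm_ring_1 \<Rightarrow> 'a"
    and sT :: "complex \<Rightarrow> 't::ab_group_add \<Rightarrow> 't"
    and tens :: "'l \<Rightarrow> 'a \<Rightarrow> 't"
    and DT :: "'t \<Rightarrow> 't"
    and brT :: "'t \<Rightarrow> 't \<Rightarrow> 't poly"
  assumes L: "lie_conf_superalg sL D g br"
    and Z: "centralizer br (derived sL br) = {0}"
    and A: "comm_algebra sA"
    and T: "tensor_product sL sA sT tens"
    and C: "current_structure sL D br sT tens DT brT"
    and H: "\<forall>d Psi. super_commuting sL g br d Psi \<longrightarrow> in_centroid sL g br d Psi"
  shows "\<forall>d Psi. super_commuting sT (current_grading sT tens g) brT d Psi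
                 \<longrightarrow> in_centroid sT (current_grading sT tens g) brT d Psi"
proof (intro allI impI)
  fix d Psi
  assume SC: "super_commuting sT (current_grading sT tens g) brT d Psi"
  have vs: "vector_space sL"
    and br_right: "\<And>x. lin_to_poly sL sL (br x)" and br_left: "\<And>y. lin_to_poly sL sL (\<lambda>x. br x y)"
    using L by (simp_all add: lie_conf_superalg_def)
  have subspace: "module.subspace sL (g i)" for i
    using L by (cases i) (simp_all add: lie_conf_superalg_def)
  have "centroid_map sL g br d \<theta>" if "commuting_map sL g br d \<theta>" for \<theta>
    using H super_commuting_const[OF vs subspace br_left that] centroid_map_if_in_centroid_const
    by blast
  then interpret current_algebra sL sA sT tens br brT g d
    using T A C br_right br_left subspace
    by unfold_locales (simp_all add: current_structure_def)
  have "centroid_map sT (current_grading sT tens g) brT d (\<lambda>u. coeff (Psi u) n)" for n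
    by (intro commuting_map_in_centroid super_commuting_imp_commuting_map_coeff[OF T.vector_space_axioms SC])
  with SC show "in_centroid sT (current_grading sT tens g) brT d Psi"
    by (simp add: in_centroid_iff_coeffs super_commuting_def)
qed

end
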